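(* Let $I=\langle N,M,V\rangle$ be an ordered instance of goods, let $k>0$ be an integer and let $S\subset M$ be a set of $k-1$ goods. Suppose that for each agent $i\in N$, $B_i$ is a bundle in some MMS partition of $i$ with $|B_i|=k$ and $S\subset B_i$. Then there is an agent $i'\in N$ such that allocating $B_{i'}$ to $i'$ is a valid reduction.
   Context: An instance $I=\langle N,M,V\rangle$ has agents $N=\{1,\dots,n\}$, goods $M=\{1,\dots,m\}$ and additive valuations $v_i$ with $v_i(\emptyset)=0$, $v_i(S)=\sum_{g\in S}v_i(\{g\})$, $v_{ij}:=v_i(\{j\})\ge 0$. It is ordered if $v_{ij}\ge v_{i(j+1)}$ for all $i$ and $1\le j<m$. An allocation ($n$-partition) is an ordered $n$-tuple of pairwise disjoint, possibly empty subsets of $M$ with union $M$. The maximin share of $i$ in $I$ is $\mu_i^I=\max_A\min_j v_i(A_j)$ over all allocations; an MMS partition of $i$ is an allocation $A$ with $v_i(A_j)\ge\mu_i^I$ for all $j$. Removing agents $N'\subseteq N$ and items $M'\subseteq M$ is a valid reduction if the items of $M'$ can be allocated to the agents of $N'$ so that each $i'\in N'$ receives a bundle $B_{i'}$ with $v_{i'}(B_{i'})\ge\mu_{i'}^I$, and every $i\in N\setminus N'$ satisfies $\mu_i^{I'}\ge\mu_i^I$, where $I'=\langle N\setminus N', M\setminus M', V\rangle$ (valuations restricted, maximin share computed with $|N\setminus N'|$ bundles). "Allocating $B$ to $i$ is a valid reduction" means this holds with $N'=\{i\}$, $M'=B$. *)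

theory Defs
  imports Complex_Main
begin

text \<open>Agents are 1..n, goods are 1..m, valuation v i j of agent i for good j.
  Additive valuation of a bundle.\<close>

definition val :: "(nat \<Rightarrow> nat \<Rightarrow> real) \<Rightarrow> nat \<Rightarrow> nat set \<Rightarrow> real" where
  "val v i S = (\<Sum>j\<in>S. v i j)"

text \<open>Allocations (k-partitions) of the item set G: ordered k-tuples of pairwise
  disjoint, possibly empty subsets of G with union G; bundles indexed by 0..k-1.\<close>

definition partitions :: "nat \<Rightarrow> nat set \<Rightarrow> (nat \<Rightarrow> nat set) set" where
  "partitions k G = {A. (\<forall>j<k. A j \<subseteq> G)
      \<and> (\<forall>j<k. \<forall>j'<k. j \<noteq> j' \<longrightarrow> A j \<inter> A j' = {})
      \<and> (\<Union>j<k. A j) = G}"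

definition mms :: "(nat \<Rightarrow> nat \<Rightarrow> real) \<Rightarrow> nat \<Rightarrow> nat \<Rightarrow> nat set \<Rightarrow> real" where
  "mms v i k G = Max ((\<lambda>A. Min ((\<lambda>j. val v i (A j)) ` {..<k})) ` partitions k G)"

definition mms_partition :: "nat \<Rightarrow> nat \<Rightarrow> (nat \<Rightarrow> nat \<Rightarrow> real) \<Rightarrow> nat \<Rightarrow> (nat \<Rightarrow> nat set) \<Rightarrow> bool" where
  "mms_partition n m v i A \<longleftrightarrow> A \<in> partitions n {1..m}
      \<and> (\<forall>j<n. val v i (A j) \<ge> mms v i n {1..m})"

definition ordered_instance :: "nat \<Rightarrow> nat \<Rightarrow> (nat \<Rightarrow> nat \<Rightarrow> real) \<Rightarrow> bool" where
  "ordered_instance n m v \<longleftrightarrow>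
     (\<forall>i\<in>{1..n}. \<forall>j\<in>{1..m}. v i j \<ge> 0)
   \<and> (\<forall>i\<in>{1..n}. \<forall>j. 1 \<le> j \<and> j < m \<longrightarrow> v i j \<ge> v i (j + 1))"

definition valid_reduction :: "nat \<Rightarrow> nat \<Rightarrow> (nat \<Rightarrow> nat \<Rightarrow> real) \<Rightarrow> nat set \<Rightarrow> nat set \<Rightarrow> bool" where
  "valid_reduction n m v N' M' \<longleftrightarrow>
     (\<exists>B. (\<forall>i\<in>N'. B i \<subseteq> M')
        \<and> (\<forall>i\<in>N'. \<forall>i'\<in>N'. i \<noteq> i' \<longrightarrow> B i \<inter> B i' = {})
        \<and> (\<Union>i\<in>N'. B i) = M'
        \<and> (\<forall>i\<in>N'. val v i (B i) \<ge> mms v i n {1..m}))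
   \<and> (\<forall>i\<in>{1..n} - N'. mms v i (n - card N') ({1..m} - M') \<ge> mms v i n {1..m})"

end

theory Submission
  imports Defs "HOL-Library.FuncSet" "HOL-Combinatorics.Transposition"
begin

text \<open>Every bundle \<open>B i\<close> is \<open>S\<close> plus one further good \<open>g i\<close>. Give \<open>B i'\<close> to an agent
  whose extra good \<open>g i'\<close> has the largest index, hence is the least valuable one for
  everybody. For any other agent \<open>i\<close>, take an MMS partition of \<open>i\<close> containing
  \<open>B i = S \<union> {g i}\<close>, drop that bundle and put \<open>g i\<close> in place of \<open>g i'\<close> in whichever
  bundle held it. Since \<open>v i (g i') \<le> v i (g i)\<close>, this yields \<open>n - 1\<close> bundles of the
  remaining goods, each still worth at least the maximin share of \<open>i\<close>.\<close>

lemma ordered_instance_antimono: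
  assumes "ordered_instance n m v" "i \<in> {1..n}" "1 \<le> a" "a \<le> b" "b \<le> m"
  shows "v i b \<le> v i a"
  using assms(4,5)
proof (induction b rule: dec_induct)
  case base
  then show ?case by simp
next
  case (step b)
  then have "v i (b + 1) \<le> v i b"
    using assms(1-3) unfolding ordered_instance_def by auto
  with step show ?case by simp
qed

lemma partitions_subset:
  assumes "A \<in> partitions k G" "j < k"
  shows "A j \<subseteq> G"
  using assms unfolding partitions_def by blast

lemma mms_partitionD:
  assumes "mms_partition n m v i A" "j < n"
  shows "A j \<subseteq> {1..m}" "mms v i n {1..m} \<le> val v i (A j)"
  using assms partitions_subset[of A n "{1..m}" j] unfolding mms_partition_def by auto

lemma mms_bundleD:
  assumes "\<exists>A. mms_partition n m v i A \<and> (\<exists>j<n. A j = X)"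
  shows "X \<subseteq> {1..m}" "mms v i n {1..m} \<le> val v i X"
  using assms mms_partitionD by blast+

lemma finite_partition_values:
  assumes "finite G"
  shows "finite ((\<lambda>A. Min ((\<lambda>j. val v i (A j)) ` {..<k})) ` partitions k G)"
    (is "finite (?f ` _)")
proof -
  let ?r = "\<lambda>A. restrict A {..<k}"
  have "?f (?r A) = ?f A" for A
    by (rule arg_cong[where f = Min], rule image_cong) simp_all
  then have "?f ` partitions k G = ?f ` ?r ` partitions k G"
    by (simp add: image_image)
  moreover have "?r ` partitions k G \<subseteq> (\<Pi>\<^sub>E j\<in>{..<k}. Pow G)"
  proof
    fix x assume "x \<in> ?r ` partitions k G"
    then obtain A where "A \<in> partitions k G" "x = ?r A"
      by blast
    then show "x \<in> (\<Pi>\<^sub>E j\<in>{..<k}. Pow G)"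
      using partitions_subset by (simp add: restrict_PiE_iff)
  qed
  then have "finite (?r ` partitions k G)"
    by (rule finite_subset) (simp add: assms finite_PiE)
  ultimately show ?thesis
    by (metis finite_imageI)
qed

lemma mms_geI:
  assumes "finite G" "k \<ge> 1" "A \<in> partitions k G" "\<And>j. j < k \<Longrightarrow> \<mu> \<le> val v i (A j)"
  shows "\<mu> \<le> mms v i k G"
proof -
  have "\<mu> \<le> Min ((\<lambda>j. val v i (A j)) ` {..<k})"
    using assms(2,4) by (subst Min_ge_iff) (auto simp: lessThan_empty_iff)
  also have "\<dots> \<le> mms v i k G"
    unfolding mms_def using finite_partition_values[OF assms(1)] assms(3) by (intro Max_ge) auto
  finally show ?thesis .
qed

lemma partitions_image:
  assumes "inj_on f G" "A \<in> partitions k G"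
  shows "(\<lambda>j. f ` A j) \<in> partitions k (f ` G)"
proof -
  have sub: "\<forall>j<k. A j \<subseteq> G" and dis: "\<forall>j<k. \<forall>j'<k. j \<noteq> j' \<longrightarrow> A j \<inter> A j' = {}"
    and un: "(\<Union>j<k. A j) = G"
    using assms(2) unfolding partitions_def by auto
  have "f ` A j \<inter> f ` A j' = {}" if "j < k" "j' < k" "j \<noteq> j'" for j j'
  proof -
    have "f ` A j \<inter> f ` A j' = f ` (A j \<inter> A j')"
      using inj_on_image_Int[OF assms(1)] sub that by simp
    with dis that show ?thesis by simp
  qed
  moreover have "(\<Union>j<k. f ` A j) = f ` G"
    unfolding un[symmetric] by (rule image_UN[symmetric])
  ultimately show ?thesis
    using sub unfolding partitions_def by blast
qed

lemma partitions_remove_bundle: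
  assumes "A \<in> partitions n G" "j0 < n"
  shows "(\<lambda>j. A (if j = j0 then n - 1 else j)) \<in> partitions (n - 1) (G - A j0)"
proof -
  define \<tau> where "\<tau> j = (if j = j0 then n - 1 else j)" for j
  have sub: "\<forall>j<n. A j \<subseteq> G" and dis: "\<forall>j<n. \<forall>j'<n. j \<noteq> j' \<longrightarrow> A j \<inter> A j' = {}"
    and un: "(\<Union>j<n. A j) = G"
    using assms(1) unfolding partitions_def by auto
  have \<tau>_image: "\<tau> ` {..<n - 1} = {..<n} - {j0}"
    using assms(2) by (auto simp: \<tau>_def image_iff)
  have \<tau>_inj: "inj_on \<tau> {..<n - 1}"
    by (auto simp: \<tau>_def inj_on_def)
  have "A (\<tau> j) \<subseteq> G - A j0" if "j < n - 1" for j
  proof -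
    have "\<tau> j < n" "\<tau> j \<noteq> j0"
      using \<tau>_image that by blast+
    with sub dis assms(2) show ?thesis by blast
  qed
  moreover have "A (\<tau> j) \<inter> A (\<tau> j') = {}" if "j < n - 1" "j' < n - 1" "j \<noteq> j'" for j j'
  proof -
    have "\<tau> j < n" "\<tau> j' < n" "\<tau> j \<noteq> \<tau> j'"
      using \<tau>_image \<tau>_inj that by (auto dest: inj_onD)
    with dis show ?thesis by blast
  qed
  moreover have "(\<Union>j<n - 1. A (\<tau> j)) = G - A j0"
  proof -
    have "(\<Union>j<n - 1. A (\<tau> j)) = (\<Union>j\<in>{..<n} - {j0}. A j)"
      by (simp add: \<tau>_image[symmetric] image_comp)
    also have "\<dots> = G - A j0"
      using un dis assms(2) by blast
    finally show ?thesis .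
  qed
  ultimately show ?thesis
    unfolding partitions_def \<tau>_def by blast
qed

lemma val_transpose_ge:
  assumes "finite X" "g \<notin> X" "v i g' \<le> v i g"
  shows "val v i X \<le> val v i (transpose g g' ` X)"
proof -
  have "val v i (transpose g g' ` X) = (\<Sum>x\<in>X. v i (transpose g g' x))"
    unfolding val_def by (simp add: sum.reindex)
  moreover have "v i x \<le> v i (transpose g g' x)" if "x \<in> X" for x
    using assms(2,3) that by (auto simp: transpose_def)
  ultimately show ?thesis
    unfolding val_def by (simp add: sum_mono)
qed

lemma mms_remove_bundle_exchange:
  assumes "finite G" "A \<in> partitions n G" "n \<ge> 2" "j0 < n" "A j0 = insert g S" "g \<notin> S"
    and "g' \<in> G - S" "v i g' \<le> v i g" "\<And>j. j < n \<Longrightarrow> \<mu> \<le> val v i (A j)"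
  shows "\<mu> \<le> mms v i (n - 1) (G - insert g' S)"
proof -
  define R where "R j = A (if j = j0 then n - 1 else j)" for j
  have R: "R \<in> partitions (n - 1) (G - A j0)"
    unfolding R_def using assms(2,4) by (rule partitions_remove_bundle)
  have "g \<in> G"
    using partitions_subset[OF assms(2,4)] assms(5) by blast
  then have "transpose g g' ` (G - A j0) = G - insert g' S"
    using assms(5-7) by (cases "g = g'") (auto simp: in_transpose_image_iff transpose_def)
  then have P: "(\<lambda>j. transpose g g' ` R j) \<in> partitions (n - 1) (G - insert g' S)"
    using partitions_image[OF inj_on_transpose[of g g'] R] by simp
  have "\<mu> \<le> val v i (transpose g g' ` R j)" if "j < n - 1" for j
  proof -
    have "R j \<subseteq> G - A j0"
      using partitions_subset[OF R that] .
    then have "val v i (R j) \<le> val v i (transpose g g' ` R j)"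
      using assms(1,5,8) by (intro val_transpose_ge) (auto intro: finite_subset)
    moreover have "\<mu> \<le> val v i (R j)"
      unfolding R_def using assms(9) that by auto
    ultimately show ?thesis by linarith
  qed
  with P show ?thesis
    using assms(1,3) by (intro mms_geI) auto
qed

lemma mms_remove_bundle_ordered:
  assumes "ordered_instance n m v" "i \<in> {1..n}" "n \<ge> 2" "mms_partition n m v i A"
    and "j < n" "A j = insert g S" "g \<notin> S" "g' \<in> {1..m} - S" "g \<le> g'"
  shows "mms v i n {1..m} \<le> mms v i (n - 1) ({1..m} - insert g' S)"
proof -
  have "g \<in> {1..m}"
    using mms_partitionD(1)[OF assms(4,5)] assms(6) by blast
  then have "v i g' \<le> v i g"
    using assms(8,9) by (intro ordered_instance_antimono[OF assms(1,2)]) auto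
  moreover have A: "A \<in> partitions n {1..m}"
    using assms(4) unfolding mms_partition_def by blast
  ultimately show ?thesis
    using mms_remove_bundle_exchange[OF finite_atLeastAtMost A assms(3,5-8)]
      mms_partitionD(2)[OF assms(4)] by blast
qed

lemma card_psuperset_eq_insert:
  assumes "finite B" "S \<subset> B" "card B = Suc (card S)"
  obtains g where "g \<notin> S" "B = insert g S"
proof -
  have "S \<subseteq> B" "finite S"
    using assms(1,2) finite_subset by auto
  then have "card (B - S) = 1"
    using assms(3) by (simp add: card_Diff_subset)
  then obtain g where "B - S = {g}"
    by (rule card_1_singletonE)
  with assms(2) show thesis
    using that by blast
qed

lemma card_Suc_psupersets_eq_insert:
  assumes "\<forall>i\<in>I. finite (B i) \<and> S \<subset> B i \<and> card (B i) = Suc (card S)"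
  obtains g where "\<forall>i\<in>I. g i \<notin> S \<and> B i = insert (g i) S"
proof -
  have "\<exists>x. x \<notin> S \<and> B i = insert x S" if "i \<in> I" for i
  proof -
    have "finite (B i)" "S \<subset> B i" "card (B i) = Suc (card S)"
      using assms that by auto
    then obtain x where "x \<notin> S" "B i = insert x S"
      by (rule card_psuperset_eq_insert)
    then show ?thesis
      by blast
  qed
  then have "\<forall>i\<in>I. \<exists>x. x \<notin> S \<and> B i = insert x S"
    by blast
  from bchoice[OF this] that show thesis
    by blast
qed

lemma valid_reduction_singletonI:
  assumes "mms v i n {1..m} \<le> val v i X"
    and "\<And>i'. i' \<in> {1..n} - {i} \<Longrightarrow> mms v i' n {1..m} \<le> mms v i' (n - 1) ({1..m} - X)"
  shows "valid_reduction n m v {i} X"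
  unfolding valid_reduction_def using assms by (intro conjI exI[of _ "\<lambda>_. X"]) auto

theorem lemma12:
  fixes n m k :: nat and v :: "nat \<Rightarrow> nat \<Rightarrow> real"
    and S :: "nat set" and B :: "nat \<Rightarrow> nat set"
  assumes "n \<ge> 1"
    and "ordered_instance n m v"
    and "k > 0"
    and "S \<subseteq> {1..m}" and "card S = k - 1"
    and "\<forall>i\<in>{1..n}. (\<exists>A. mms_partition n m v i A \<and> (\<exists>j<n. A j = B i))
                     \<and> card (B i) = k \<and> S \<subset> B i"
  shows "\<exists>i'\<in>{1..n}. valid_reduction n m v {i'} (B i')"
proof -
  have in_mms_partition: "\<exists>A. mms_partition n m v i A \<and> (\<exists>j<n. A j = B i)"
    if "i \<in> {1..n}" for i
    using assms(6) that by blast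
  have "\<forall>i\<in>{1..n}. finite (B i) \<and> S \<subset> B i \<and> card (B i) = Suc (card S)"
    using assms(3,5,6) mms_bundleD(1)[OF in_mms_partition] finite_subset[OF _ finite_atLeastAtMost]
    by auto
  then obtain g where g: "\<forall>i\<in>{1..n}. g i \<notin> S \<and> B i = insert (g i) S"
    by (rule card_Suc_psupersets_eq_insert)
  have "Max (g ` {1..n}) \<in> g ` {1..n}"
    using assms(1) by (intro Max_in) auto
  then obtain i' where i': "i' \<in> {1..n}" "Max (g ` {1..n}) = g i'"
    by blast
  have "valid_reduction n m v {i'} (B i')"
  proof (rule valid_reduction_singletonI)
    show "mms v i' n {1..m} \<le> val v i' (B i')"
      using mms_bundleD(2)[OF in_mms_partition[OF i'(1)]] .
  next
    fix i assume i: "i \<in> {1..n} - {i'}"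
    then have iN: "i \<in> {1..n}" and "n \<ge> 2" "g i \<le> g i'"
      using i'(1) i'(2)[symmetric] by auto
    obtain A j where A: "mms_partition n m v i A" "j < n" "A j = B i"
      using in_mms_partition[OF iN] by blast
    have "g i \<notin> S" "A j = insert (g i) S" "g i' \<in> {1..m} - S"
      using g A(3) mms_bundleD(1)[OF in_mms_partition[OF i'(1)]] iN i'(1) by auto
    then have "mms v i n {1..m} \<le> mms v i (n - 1) ({1..m} - insert (g i') S)"
      using mms_remove_bundle_ordered[OF assms(2) iN \<open>n \<ge> 2\<close> A(1,2)] \<open>g i \<le> g i'\<close> by blast
    then show "mms v i n {1..m} \<le> mms v i (n - 1) ({1..m} - B i')"
      using g i'(1) by simp
  qed
  with i'(1) show ?thesis
    by blast
qed

end
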